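(* Let $f:\mathbb C\to\mathbb C$ be an entire function and $J\in\mathbb C^{n\times n}$ a matrix in Jordan normal form with all eigenvalues in the closed unit disk $\mathbb D$, and let $\mathcal C:=\mathsf{blkspec}(J)$. Then \[ \|f(J)(zI-J)^{-1}\|_{\mathcal H_\infty}\le H^{(\infty)}_f(\mathcal C),\qquad\|f(J)(zI-J)^{-1}\|_{\mathcal H_2^{\mathrm{op}}}\le H^{(2)}_f(\mathcal C). \] Moreover, if $f$ is a polynomial of degree at most $d$, then in the term of $H^{(q)}_f$ corresponding to any pair $(\lambda,k)$ with $d<k$, the factor $k^2$ may be replaced by $k(d+1)$.
   Context: $\mathsf{blkspec}(J)$ is the set of pairs $(\lambda,k)$ with $\lambda$ an eigenvalue and $k$ the size of an associated Jordan block. For $q\in\{2,\infty\}$ let $c_{\mathcal H_\infty}:=1$, $c_{\mathcal H_2}:=\sqrt{1+2/\pi}$, and for a finite $\mathcal C\subset\mathbb D\times\mathbb N$ define $H^{(q)}_f(\mathcal C):=\max_{(\lambda,k)\in\mathcal C}h_q(\lambda,k)$ where $h_q(\lambda,k)=0$ if $f$ has a zero of order $\ge k$ at $\lambda$; $h_q(\lambda,k)=\infty$ if $|\lambda|=1$ and $f$ has a zero of order $<k$ at $\lambda$; and otherwise $h_q(\lambda,k)=c_{\mathcal H_q}\max_{w:|w-\lambda|\le1-|\lambda|}\frac{k^2|f(w)|}{(1-|\lambda|)^{k-\mathbb I(q=2)/2}}$. For a matrix-valued rational function $\Phi$ of $z$ (simplified, i.e. removable singularities cancelled, before taking norms): $\|\Phi\|_{\mathcal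 H_\infty}:=\sup_{|z|=1}\|\Phi(z)\|_{\mathrm{op}}$ and $\|\Phi\|_{\mathcal H_2^{\mathrm{op}}}:=\max_{\|v\|_2=1}\sqrt{\frac1{2\pi}\int_0^{2\pi}\|v^\top\Phi(e^{i\theta})\|_2^2d\theta}$. *)

theory Defs
  imports "HOL-Analysis.Analysis" "HOL-Computational_Algebra.Polynomial"
          "Jordan_Normal_Form.Jordan_Normal_Form"
begin

text \<open>A matrix in Jordan normal form is represented as jordan_matrix n_as, where n_as lists
  the blocks as (size, eigenvalue) pairs, all sizes positive (the library convention of jordan_nf).
  blkspec collects the pairs (eigenvalue, block size).\<close>

definition blkspec :: "(nat \<times> complex) list \<Rightarrow> (complex \<times> nat) set" where
  "blkspec n_as = {(a, k). (k, a) \<in> set n_as}"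

definition jordan_block_fun :: "(complex \<Rightarrow> complex) \<Rightarrow> nat \<Rightarrow> complex \<Rightarrow> complex mat" where
  "jordan_block_fun f k a = mat k k (\<lambda>(i, j).
      if i \<le> j then (deriv ^^ (j - i)) f a / of_nat (fact (j - i)) else 0)"

definition jordan_matrix_fun :: "(complex \<Rightarrow> complex) \<Rightarrow> (nat \<times> complex) list \<Rightarrow> complex mat" where
  "jordan_matrix_fun f n_as = diag_block_mat (map (\<lambda>(k, a). jordan_block_fun f k a) n_as)"

definition mat_inv :: "complex mat \<Rightarrow> complex mat" where
  "mat_inv A = (SOME B. B \<in> carrier_mat (dim_row A) (dim_row A) \<and> inverts_mat A B \<and> inverts_mat B A)"

definition vec_norm2 :: "complex vec \<Rightarrow> real" where
  "vec_norm2 v = sqrt (\<Sum>i<dim_vec v. (cmod (v $ i))\<^sup>2)"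

text \<open>Spectral (operator 2-)norm; the 0 is only relevant for the degenerate 0 x 0 case.\<close>
definition op_norm :: "complex mat \<Rightarrow> real" where
  "op_norm M = Sup (insert 0 {vec_norm2 (M *\<^sub>v v) | v. v \<in> carrier_vec (dim_col M) \<and> vec_norm2 v = 1})"

text \<open>Phi(z) = f(J) (zI - J)^{-1}, defined for z not an eigenvalue of J.\<close>
definition Phi :: "(complex \<Rightarrow> complex) \<Rightarrow> (nat \<times> complex) list \<Rightarrow> complex \<Rightarrow> complex mat" where
  "Phi f n_as z = (let n = sum_list (map fst n_as) in
      jordan_matrix_fun f n_as * mat_inv (z \<cdot>\<^sub>m 1\<^sub>m n - jordan_matrix n_as))"

definition eigs :: "(nat \<times> complex) list \<Rightarrow> complex set" where
  "eigs n_as = snd ` set n_as"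

text \<open>The (finitely many)
  eigenvalues on the circle are excluded; since Phi is rational, this supremum equals that of
  the simplified function (it is infinite iff a genuine pole lies on the circle).\<close>
definition Hinf_norm :: "(complex \<Rightarrow> complex) \<Rightarrow> (nat \<times> complex) list \<Rightarrow> ereal" where
  "Hinf_norm f n_as = (SUP z \<in> sphere 0 1 - eigs n_as. ereal (op_norm (Phi f n_as z)))"

definition esqrt :: "ennreal \<Rightarrow> ereal" where
  "esqrt x = (if x = \<infinity> then \<infinity> else ereal (sqrt (enn2real x)))"

text \<open>H2^op norm: sup over unit v of sqrt((1/2pi) int_0^{2pi} ||v^T Phi(e^{it})||^2 dt); the
  integrand is set to 0 on the finitely many (null) parameters where e^{it} is an eigenvalue.\<close>
definition H2op_norm :: "(complex \<Rightarrow> complex) \<Rightarrow> (nat \<times> complex) list \<Rightarrow> ereal" where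
  "H2op_norm f n_as = (let n = sum_list (map fst n_as) in
     (SUP v \<in> {v \<in> carrier_vec n. vec_norm2 v = 1}.
        esqrt (ennreal (1 / (2 * pi)) *
          (\<integral>\<^sup>+ t. ennreal (if cis t \<in> eigs n_as then 0
                   else (vec_norm2 (transpose_mat (Phi f n_as (cis t)) *\<^sub>v v))\<^sup>2)
              \<partial>lebesgue_on {0..2*pi}))))"

text \<open>is_H2 = False gives q = infinity, is_H2 = True gives q = 2. The argument kf is the factor
  in front of |f(w)|, normally k^2 (with k the block size).\<close>
definition c_H :: "bool \<Rightarrow> real" where
  "c_H is_H2 = (if is_H2 then sqrt (1 + 2 / pi) else 1)"

definition zero_order_ge :: "(complex \<Rightarrow> complex) \<Rightarrow> complex \<Rightarrow> nat \<Rightarrow> bool" where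
  "zero_order_ge f a k \<longleftrightarrow> (\<forall>j<k. (deriv ^^ j) f a = 0)"

definition h_term :: "bool \<Rightarrow> (nat \<Rightarrow> real) \<Rightarrow> (complex \<Rightarrow> complex) \<Rightarrow> complex \<times> nat \<Rightarrow> ereal" where
  "h_term is_H2 kf f = (\<lambda>(a, k).
     if zero_order_ge f a k then 0
     else if cmod a = 1 then \<infinity>
     else ereal (c_H is_H2 *
       Sup ((\<lambda>w. kf k * cmod (f w) / (1 - cmod a) powr (real k - (if is_H2 then 1/2 else 0)))
              ` cball a (1 - cmod a))))"

text \<open>Maximum over the finite set C (0 for empty C, all terms being nonnegative).\<close>
definition H_bound :: "bool \<Rightarrow> (nat \<Rightarrow> real) \<Rightarrow> (complex \<Rightarrow> complex) \<Rightarrow> (complex \<times> nat) set \<Rightarrow> ereal" where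
  "H_bound is_H2 kf f C = Sup (insert 0 (h_term is_H2 kf f ` C))"

end

(* On the unit circle, Phi(z) = f(J) (zI - J)^-1 is block diagonal; the block of a Jordan block
   J_k(a) is F R, where F is the upper triangular Toeplitz matrix of the Taylor coefficients
   f^(m)(a)/m! and R = (zI - J_k(a))^-1 the one with entries (z - a)^-(j-i+1).  With r = 1 - |a|,
   Cauchy's inequality on the circle |w - a| = r bounds the m-th Taylor coefficient by M/r^m, M the
   maximum of |f| on the disc, and |z - a| >= r; so every entry of F R is at most N M/(r^(k-1) |z - a|),
   N the number of nonzero Taylor coefficients of order < k (N <= k, and N <= d+1 for a polynomial of
   degree d), and a k x k matrix with entries bounded by K has operator norm at most k K.  For the
   H-infinity norm use |z - a| >= r once more; for the H2 norm integrate |e^(it) - a|^-2 over the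
   circle, which gives 2 pi/(1 - |a|^2) <= 2 pi/r (Poisson).  Both estimates pass blockwise to the
   block diagonal matrix. *)

theory Submission
  imports Defs "HOL-Complex_Analysis.Complex_Analysis"
begin

definition vec_sqnorm :: "complex vec \<Rightarrow> real" where
  "vec_sqnorm v = (\<Sum>i<dim_vec v. (cmod (v $ i))\<^sup>2)"

lemma vec_sqnorm_nonneg: "0 \<le> vec_sqnorm v"
  unfolding vec_sqnorm_def by (simp add: sum_nonneg)

lemma vec_norm2_eq_sqrt_sqnorm: "vec_norm2 v = sqrt (vec_sqnorm v)"
  unfolding vec_norm2_def vec_sqnorm_def by simp

lemma vec_sqnorm_append: "vec_sqnorm (u @\<^sub>v w) = vec_sqnorm u + vec_sqnorm w"
proof -
  have split: "(\<Sum>i<m + n. g i) = (\<Sum>i<m. g i) + (\<Sum>i<n. g (m + i))"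
    for m n and g :: "nat \<Rightarrow> real"
    by (induct n) (auto simp: add.assoc)
  show ?thesis
    unfolding vec_sqnorm_def by (simp add: split)
qed

lemma vec_sqnorm_split:
  "w \<in> carrier_vec (m + n) \<Longrightarrow> vec_sqnorm w = vec_sqnorm (vec_first w m) + vec_sqnorm (vec_last w n)"
  using vec_sqnorm_append[of "vec_first w m" "vec_last w n"] by simp

lemma vec_sqnorm_zero_mat_mult_vec: "u \<in> carrier_vec k \<Longrightarrow> vec_sqnorm (0\<^sub>m k k *\<^sub>v u) = 0"
  unfolding vec_sqnorm_def by (simp add: scalar_prod_def)

lemma vec_sqnorm_mult_vec_le:
  assumes A: "A \<in> carrier_mat nr nc" and u: "u \<in> carrier_vec nc"
    and K: "\<And>i j. i < nr \<Longrightarrow> j < nc \<Longrightarrow> cmod (A $$ (i, j)) \<le> K"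
  shows "vec_sqnorm (A *\<^sub>v u) \<le> real nr * real nc * K\<^sup>2 * vec_sqnorm u"
proof -
  have row: "cmod ((A *\<^sub>v u) $ i) \<le> K * (\<Sum>j<nc. cmod (u $ j))" if i: "i < nr" for i
  proof -
    have "(A *\<^sub>v u) $ i = (\<Sum>j<nc. A $$ (i, j) * u $ j)"
      using A u i by (auto simp: scalar_prod_def lessThan_atLeast0)
    also have "cmod \<dots> \<le> (\<Sum>j<nc. cmod (A $$ (i, j)) * cmod (u $ j))"
      by (rule order_trans[OF norm_sum]) (simp add: norm_mult)
    also have "\<dots> \<le> (\<Sum>j<nc. K * cmod (u $ j))"
      by (rule sum_mono) (simp add: K i mult_right_mono)
    finally show ?thesis by (simp add: sum_distrib_left)
  qed
  have "(cmod ((A *\<^sub>v u) $ i))\<^sup>2 \<le> K\<^sup>2 * (real nc * vec_sqnorm u)" if i: "i < nr" for i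
  proof -
    have "(cmod ((A *\<^sub>v u) $ i))\<^sup>2 \<le> K\<^sup>2 * (\<Sum>j<nc. cmod (u $ j))\<^sup>2"
      using row[OF i] by (metis norm_ge_zero power_mono power_mult_distrib)
    moreover have "(\<Sum>j<nc. cmod (u $ j))\<^sup>2 \<le> real nc * vec_sqnorm u"
      using sum_squared_le_sum_of_squares[of "\<lambda>j. cmod (u $ j)" "{..<nc}"] u
      by (simp add: vec_sqnorm_def mult.commute)
    ultimately show ?thesis
      by (meson mult_left_mono order_trans zero_le_power2)
  qed
  then have "(\<Sum>i<nr. (cmod ((A *\<^sub>v u) $ i))\<^sup>2) \<le> (\<Sum>i<nr. K\<^sup>2 * (real nc * vec_sqnorm u))"
    by (intro sum_mono) simp
  then show ?thesis
    using A by (simp add: vec_sqnorm_def mult_ac)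
qed

section \<open>Block diagonal matrices\<close>

abbreviation dim_sum :: "('b \<Rightarrow> nat) \<Rightarrow> 'b list \<Rightarrow> nat" where
  "dim_sum d xs \<equiv> sum_list (map d xs)"

lemma diag_block_mat_carrier:
  assumes "\<And>x. x \<in> set xs \<Longrightarrow> A x \<in> carrier_mat (d x) (d x)"
  shows "diag_block_mat (map A xs) \<in> carrier_mat (dim_sum d xs) (dim_sum d xs)"
  using assms by (induct xs) (auto simp: Let_def)

lemma diag_block_mat_mult:
  assumes "\<And>x. x \<in> set xs \<Longrightarrow> A x \<in> carrier_mat (d x) (d x) \<and> B x \<in> carrier_mat (d x) (d x)"
  shows "diag_block_mat (map A xs) * diag_block_mat (map B xs) = diag_block_mat (map (\<lambda>x. A x * B x) xs)"
  using assms
proof (induct xs)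
  case Nil
  then show ?case by (auto intro!: eq_matI)
next
  case (Cons x xs)
  let ?n = "dim_sum d xs"
  have carriers: "A x \<in> carrier_mat (d x) (d x)" "B x \<in> carrier_mat (d x) (d x)"
    "diag_block_mat (map A xs) \<in> carrier_mat ?n ?n" "diag_block_mat (map B xs) \<in> carrier_mat ?n ?n"
    "diag_block_mat (map (\<lambda>x. A x * B x) xs) \<in> carrier_mat ?n ?n"
    using Cons.prems by (auto intro!: diag_block_mat_carrier mult_carrier_mat)
  have IH: "diag_block_mat (map A xs) * diag_block_mat (map B xs) = diag_block_mat (map (\<lambda>x. A x * B x) xs)"
    using Cons by simp
  show ?case
    unfolding list.map diag_block_mat.simps Let_def
    by (subst mult_four_block_mat[of _ "d x" "d x" _ ?n _ ?n _ _ "d x" _ ?n]) (use carriers in \<open>auto simp: IH\<close>)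
qed

lemma diag_block_mat_one: "diag_block_mat (map (\<lambda>x. 1\<^sub>m (d x)) xs) = 1\<^sub>m (dim_sum d xs)"
  by (induct xs) (auto simp: Let_def)

lemma smult_one_minus_diag_block_mat:
  fixes A :: "'b \<Rightarrow> complex mat"
  assumes "\<And>x. x \<in> set xs \<Longrightarrow> A x \<in> carrier_mat (d x) (d x)"
  shows "z \<cdot>\<^sub>m 1\<^sub>m (dim_sum d xs) - diag_block_mat (map A xs)
       = diag_block_mat (map (\<lambda>x. z \<cdot>\<^sub>m 1\<^sub>m (d x) - A x) xs)"
  using assms
proof (induct xs)
  case Nil
  then show ?case by (auto intro!: eq_matI)
next
  case (Cons x xs)
  have "A x \<in> carrier_mat (d x) (d x)"
    "diag_block_mat (map A xs) \<in> carrier_mat (dim_sum d xs) (dim_sum d xs)"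
    using Cons.prems by (auto intro!: diag_block_mat_carrier)
  then have dims: "dim_row (A x) = d x" "dim_col (A x) = d x"
    "dim_row (diag_block_mat (map A xs)) = dim_sum d xs"
    "dim_col (diag_block_mat (map A xs)) = dim_sum d xs"
    by auto
  show ?case
    unfolding list.map diag_block_mat.simps Let_def Cons(1)[OF Cons.prems, symmetric, simplified]
    by (rule eq_matI) (auto simp: dims)
qed

lemma transpose_diag_block_mat:
  assumes "\<And>x. x \<in> set xs \<Longrightarrow> A x \<in> carrier_mat (d x) (d x)"
  shows "transpose_mat (diag_block_mat (map A xs)) = diag_block_mat (map (\<lambda>x. transpose_mat (A x)) xs)"
  using assms
proof (induct xs)
  case Nil
  then show ?case by (auto intro!: eq_matI)
next
  case (Cons x xs)
  have "A x \<in> carrier_mat (d x) (d x)"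
    "diag_block_mat (map A xs) \<in> carrier_mat (dim_sum d xs) (dim_sum d xs)"
    "diag_block_mat (map (\<lambda>x. transpose_mat (A x)) xs) \<in> carrier_mat (dim_sum d xs) (dim_sum d xs)"
    using Cons.prems by (auto intro!: diag_block_mat_carrier)
  then show ?case
    unfolding list.map diag_block_mat.simps Let_def
    using Cons by (subst transpose_four_block_mat) auto
qed

fun block_weighted_sqnorm :: "('b \<Rightarrow> nat) \<Rightarrow> ('b \<Rightarrow> real) \<Rightarrow> 'b list \<Rightarrow> complex vec \<Rightarrow> real" where
  "block_weighted_sqnorm d \<beta> [] w = 0"
| "block_weighted_sqnorm d \<beta> (x # xs) w =
     \<beta> x * vec_sqnorm (vec_first w (d x)) + block_weighted_sqnorm d \<beta> xs (vec_last w (dim_sum d xs))"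

lemma diag_block_mat_mult_vec_sqnorm_le:
  assumes "\<And>x. x \<in> set xs \<Longrightarrow> A x \<in> carrier_mat (d x) (d x)"
    and "\<And>x u. x \<in> set xs \<Longrightarrow> u \<in> carrier_vec (d x) \<Longrightarrow> vec_sqnorm (A x *\<^sub>v u) \<le> \<beta> x * vec_sqnorm u"
    and "w \<in> carrier_vec (dim_sum d xs)"
  shows "vec_sqnorm (diag_block_mat (map A xs) *\<^sub>v w) \<le> block_weighted_sqnorm d \<beta> xs w"
  using assms
proof (induct xs arbitrary: w)
  case Nil
  then show ?case by (simp add: vec_sqnorm_def)
next
  case (Cons x xs w)
  let ?n = "dim_sum d xs" and ?D = "diag_block_mat (map A xs)"
  let ?w1 = "vec_first w (d x)" and ?w2 = "vec_last w ?n"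
  have A: "A x \<in> carrier_mat (d x) (d x)" and D: "?D \<in> carrier_mat ?n ?n"
    using Cons.prems by (auto intro!: diag_block_mat_carrier)
  have "diag_block_mat (map A (x # xs)) *\<^sub>v w
      = four_block_mat (A x) (0\<^sub>m (d x) ?n) (0\<^sub>m ?n (d x)) ?D *\<^sub>v (?w1 @\<^sub>v ?w2)"
    using A D Cons.prems(3) by (simp add: Let_def)
  also have "\<dots> = (A x *\<^sub>v ?w1) @\<^sub>v (?D *\<^sub>v ?w2)"
    using A D by (subst four_block_mat_mult_vec[of _ "d x" "d x" _ ?n _ ?n]) auto
  finally have "vec_sqnorm (diag_block_mat (map A (x # xs)) *\<^sub>v w)
      = vec_sqnorm (A x *\<^sub>v ?w1) + vec_sqnorm (?D *\<^sub>v ?w2)"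
    by (simp add: vec_sqnorm_append)
  also have "\<dots> \<le> \<beta> x * vec_sqnorm ?w1 + block_weighted_sqnorm d \<beta> xs ?w2"
    using Cons by (intro add_mono) auto
  finally show ?case by simp
qed

lemma block_weighted_sqnorm_le:
  assumes "\<And>x. x \<in> set xs \<Longrightarrow> \<beta> x \<le> C" and "w \<in> carrier_vec (dim_sum d xs)"
  shows "block_weighted_sqnorm d \<beta> xs w \<le> C * vec_sqnorm w"
  using assms
proof (induct xs arbitrary: w)
  case Nil
  then show ?case by (simp add: vec_sqnorm_def)
next
  case (Cons x xs w)
  have "block_weighted_sqnorm d \<beta> (x # xs) w
      \<le> C * vec_sqnorm (vec_first w (d x)) + C * vec_sqnorm (vec_last w (dim_sum d xs))"
    using Cons by (auto intro!: add_mono mult_right_mono vec_sqnorm_nonneg)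
  also have "\<dots> = C * vec_sqnorm w"
    using vec_sqnorm_split[of w "d x" "dim_sum d xs"] Cons.prems(2) by (simp add: distrib_left)
  finally show ?case .
qed

lemma block_weighted_sqnorm_nonneg:
  "(\<And>x. x \<in> set xs \<Longrightarrow> 0 \<le> \<beta> x) \<Longrightarrow> 0 \<le> block_weighted_sqnorm d \<beta> xs w"
  by (induct xs arbitrary: w) (auto intro!: add_nonneg_nonneg mult_nonneg_nonneg vec_sqnorm_nonneg)

lemma has_integral_block_weighted_sqnorm:
  assumes "\<And>x. x \<in> set xs \<Longrightarrow> ((\<lambda>t. \<beta> x t) has_integral I x) S"
  shows "((\<lambda>t. block_weighted_sqnorm d (\<lambda>x. \<beta> x t) xs w) has_integral block_weighted_sqnorm d I xs w) S"
  using assms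
  by (induct xs arbitrary: w) (auto intro!: has_integral_add has_integral_mult_left)

section \<open>The resolvent of a Jordan block\<close>

definition jordan_block_resolvent :: "nat \<Rightarrow> complex \<Rightarrow> complex \<Rightarrow> complex mat" where
  "jordan_block_resolvent k a z = mat k k (\<lambda>(i, j). if i \<le> j then 1 / (z - a) ^ (j - i + 1) else 0)"

lemma jordan_block_resolvent_carrier: "jordan_block_resolvent k a z \<in> carrier_mat k k"
  unfolding jordan_block_resolvent_def by simp

lemma jordan_block_resolvent_index:
  "i < k \<Longrightarrow> j < k \<Longrightarrow> jordan_block_resolvent k a z $$ (i, j) = (if i \<le> j then 1 / (z - a) ^ (j - i + 1) else 0)"
  unfolding jordan_block_resolvent_def by simp

lemma smult_one_minus_jordan_block_index:
  fixes z a :: complex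
  shows "i < k \<Longrightarrow> l < k \<Longrightarrow> (z \<cdot>\<^sub>m 1\<^sub>m k - jordan_block k a) $$ (i, l) =
    (if l = i then z - a else 0) + (if l = Suc i then -1 else 0)"
  by (auto simp: one_mat_def)

lemma smult_one_minus_jordan_block_carrier: "z \<cdot>\<^sub>m 1\<^sub>m k - jordan_block k (a::complex) \<in> carrier_mat k k"
  by (auto simp: jordan_block_def)

lemma jordan_block_resolvent_right_inverse:
  assumes za: "z \<noteq> a"
  shows "(z \<cdot>\<^sub>m 1\<^sub>m k - jordan_block k a) * jordan_block_resolvent k a z = 1\<^sub>m k"
proof (rule eq_matI)
  fix i j assume "i < dim_row (1\<^sub>m k :: complex mat)" "j < dim_col (1\<^sub>m k :: complex mat)"
  then have i: "i < k" and j: "j < k" by auto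
  let ?q = "\<lambda>l. if l \<le> j then 1 / (z - a) ^ (j - l + 1) else 0"
  have "((z \<cdot>\<^sub>m 1\<^sub>m k - jordan_block k a) * jordan_block_resolvent k a z) $$ (i, j)
      = (\<Sum>l<k. (z \<cdot>\<^sub>m 1\<^sub>m k - jordan_block k a) $$ (i, l) * jordan_block_resolvent k a z $$ (l, j))"
    using i j smult_one_minus_jordan_block_carrier[of z k a] jordan_block_resolvent_carrier[of k a z]
    by (auto simp: scalar_prod_def lessThan_atLeast0 intro!: sum.cong)
  also have "\<dots> = (\<Sum>l<k. (if l = i then (z - a) * ?q l else 0) + (if l = Suc i then - ?q l else 0))"
    using i j
    by (intro sum.cong) (auto simp: smult_one_minus_jordan_block_index jordan_block_resolvent_index)
  also have "\<dots> = (z - a) * ?q i + (if Suc i < k then - ?q (Suc i) else 0)"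
    using i by (simp add: sum.distrib)
  also have "\<dots> = 1\<^sub>m k $$ (i, j)"
  proof (cases "i < j")
    case True
    then have "j - i + 1 = Suc (j - Suc i + 1)" by simp
    then have "(z - a) * ?q i = ?q (Suc i)" using True za by (simp add: divide_simps)
    then show ?thesis using True i j by simp
  qed (use i j za in auto)
  finally show "((z \<cdot>\<^sub>m 1\<^sub>m k - jordan_block k a) * jordan_block_resolvent k a z) $$ (i, j) = 1\<^sub>m k $$ (i, j)" .
qed (auto simp: jordan_block_resolvent_def)

lemma jordan_block_resolvent_left_inverse:
  assumes za: "z \<noteq> a"
  shows "jordan_block_resolvent k a z * (z \<cdot>\<^sub>m 1\<^sub>m k - jordan_block k a) = 1\<^sub>m k"
proof (rule eq_matI)
  fix i j assume "i < dim_row (1\<^sub>m k :: complex mat)" "j < dim_col (1\<^sub>m k :: complex mat)"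
  then have i: "i < k" and j: "j < k" by auto
  let ?q = "\<lambda>l. if i \<le> l then 1 / (z - a) ^ (l - i + 1) else 0"
  have "(jordan_block_resolvent k a z * (z \<cdot>\<^sub>m 1\<^sub>m k - jordan_block k a)) $$ (i, j)
      = (\<Sum>l<k. jordan_block_resolvent k a z $$ (i, l) * (z \<cdot>\<^sub>m 1\<^sub>m k - jordan_block k a) $$ (l, j))"
    using i j smult_one_minus_jordan_block_carrier[of z k a] jordan_block_resolvent_carrier[of k a z]
    by (auto simp: scalar_prod_def lessThan_atLeast0 intro!: sum.cong)
  also have "\<dots> = (\<Sum>l<k. (if l = j then (z - a) * ?q l else 0) + (if l = j - 1 \<and> 0 < j then - ?q l else 0))"
    using i j
    by (intro sum.cong) (auto simp: smult_one_minus_jordan_block_index jordan_block_resolvent_index)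
  also have "\<dots> = (z - a) * ?q j + (if 0 < j then - ?q (j - 1) else 0)"
    using j by (simp add: sum.distrib)
  also have "\<dots> = 1\<^sub>m k $$ (i, j)"
  proof (cases "i < j")
    case True
    then have "j - i + 1 = Suc (j - 1 - i + 1)" by simp
    then have "(z - a) * ?q j = ?q (j - 1)" using True za by (simp add: divide_simps)
    then show ?thesis using True i j by simp
  qed (use i j za in auto)
  finally show "(jordan_block_resolvent k a z * (z \<cdot>\<^sub>m 1\<^sub>m k - jordan_block k a)) $$ (i, j) = 1\<^sub>m k $$ (i, j)" .
qed (auto simp: jordan_block_resolvent_def)

lemma mat_inv_eqI:
  assumes A: "A \<in> carrier_mat n n" and B: "B \<in> carrier_mat n n"
    and AB: "A * B = 1\<^sub>m n" and BA: "B * A = 1\<^sub>m n"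
  shows "mat_inv A = B"
proof -
  have "\<exists>C. C \<in> carrier_mat (dim_row A) (dim_row A) \<and> inverts_mat A C \<and> inverts_mat C A"
    using A B AB BA by (auto simp: inverts_mat_def)
  then have C: "mat_inv A \<in> carrier_mat n n" "mat_inv A * A = 1\<^sub>m n"
    using A unfolding mat_inv_def inverts_mat_def by (smt (verit) carrier_matD(1) someI_ex)+
  have "mat_inv A = mat_inv A * (A * B)" using AB C by simp
  also have "\<dots> = (mat_inv A * A) * B" using A B C(1) by (metis assoc_mult_mat)
  also have "\<dots> = B" using B C by simp
  finally show ?thesis .
qed

definition Phi_block :: "(complex \<Rightarrow> complex) \<Rightarrow> nat \<Rightarrow> complex \<Rightarrow> complex \<Rightarrow> complex mat" where
  "Phi_block f k a z = jordan_block_fun f k a * jordan_block_resolvent k a z"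

lemma Phi_block_carrier: "Phi_block f k a z \<in> carrier_mat k k"
  unfolding Phi_block_def
  by (rule mult_carrier_mat[OF _ jordan_block_resolvent_carrier]) (simp add: jordan_block_fun_def)

lemma Phi_eq_diag_block_mat:
  assumes z: "z \<notin> eigs n_as"
  shows "Phi f n_as z = diag_block_mat (map (\<lambda>x. Phi_block f (fst x) (snd x) z) n_as)"
proof -
  let ?n = "dim_sum fst n_as"
  let ?M = "\<lambda>x. z \<cdot>\<^sub>m 1\<^sub>m (fst x) - jordan_block (fst x) (snd x)"
  let ?R = "\<lambda>x. jordan_block_resolvent (fst x) (snd x) z"
  have za: "z \<noteq> snd x" if "x \<in> set n_as" for x
    using z that unfolding eigs_def by force
  have M: "z \<cdot>\<^sub>m 1\<^sub>m ?n - jordan_matrix n_as = diag_block_mat (map ?M n_as)"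
    unfolding jordan_matrix_def split_def
    by (rule smult_one_minus_diag_block_mat) (simp add: jordan_block_def)
  have carriers: "diag_block_mat (map ?M n_as) \<in> carrier_mat ?n ?n"
    "diag_block_mat (map ?R n_as) \<in> carrier_mat ?n ?n"
    by (simp_all add: diag_block_mat_carrier smult_one_minus_jordan_block_carrier
        jordan_block_resolvent_carrier)
  have "diag_block_mat (map ?M n_as) * diag_block_mat (map ?R n_as) = 1\<^sub>m ?n"
    "diag_block_mat (map ?R n_as) * diag_block_mat (map ?M n_as) = 1\<^sub>m ?n"
    by (simp_all add: diag_block_mat_mult[where d = fst] smult_one_minus_jordan_block_carrier
        jordan_block_resolvent_carrier jordan_block_resolvent_right_inverse
        jordan_block_resolvent_left_inverse za diag_block_mat_one cong: map_cong)
  then have "mat_inv (z \<cdot>\<^sub>m 1\<^sub>m ?n - jordan_matrix n_as) = diag_block_mat (map ?R n_as)"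
    unfolding M using carriers by (intro mat_inv_eqI)
  then show ?thesis
    unfolding Phi_def Let_def jordan_matrix_fun_def split_def Phi_block_def
    by (simp add: diag_block_mat_mult[where d = fst] jordan_block_resolvent_carrier jordan_block_fun_def)
qed

section \<open>Estimates for a single block\<close>

definition nonzero_derivs :: "(complex \<Rightarrow> complex) \<Rightarrow> complex \<Rightarrow> nat \<Rightarrow> nat set" where
  "nonzero_derivs f a k = {m. m < k \<and> (deriv ^^ m) f a \<noteq> 0}"

lemma finite_nonzero_derivs: "finite (nonzero_derivs f a k)"
  unfolding nonzero_derivs_def by simp

lemma zero_order_ge_iff_nonzero_derivs_empty: "zero_order_ge f a k \<longleftrightarrow> nonzero_derivs f a k = {}"
  unfolding zero_order_ge_def nonzero_derivs_def by auto

lemma divide_power_mult_inverse_power_le: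
  fixes r \<rho> B :: real
  assumes r: "0 < r" "r \<le> 1" "r \<le> \<rho>" and B: "0 \<le> B" and mp: "m + p \<le> K"
  shows "B / r ^ m * (1 / \<rho> ^ (p + 1)) \<le> B / (r ^ K * \<rho>)"
proof -
  have \<rho>: "0 < \<rho>" using r by linarith
  have "r ^ K * \<rho> \<le> r ^ (m + p) * \<rho>"
    using r mp \<rho> by (intro mult_right_mono power_decreasing) auto
  also have "\<dots> \<le> r ^ m * \<rho> ^ p * \<rho>"
    using r \<rho> by (simp add: power_add mult_left_mono power_mono)
  finally have le: "r ^ K * \<rho> \<le> r ^ m * \<rho> ^ (p + 1)" by (simp add: mult_ac)
  have "B / r ^ m * (1 / \<rho> ^ (p + 1)) = B / (r ^ m * \<rho> ^ (p + 1))" by simp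
  also have "\<dots> \<le> B / (r ^ K * \<rho>)"
    by (rule divide_left_mono[OF le B]) (use r \<rho> in auto)
  finally show ?thesis .
qed

lemma jordan_block_fun_resolvent_entry_product_le:
  fixes f :: "complex \<Rightarrow> complex" and r B :: real
  assumes holf: "f holomorphic_on cball a r" and r: "0 < r" "r \<le> 1" "r \<le> cmod (z - a)"
    and Bf: "\<And>w. cmod (a - w) = r \<Longrightarrow> cmod (f w) \<le> B"
    and ilj: "i \<le> l" "l \<le> j" "j < k"
  shows "cmod (jordan_block_fun f k a $$ (i, l) * jordan_block_resolvent k a z $$ (l, j))
    \<le> B / (r ^ (k - 1) * cmod (z - a))"
proof -
  define \<rho> where "\<rho> = cmod (z - a)"
  have \<rho>: "0 < \<rho>" "r \<le> \<rho>" using r unfolding \<rho>_def by auto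
  have B: "0 \<le> B"
    using Bf[of "a - of_real r"] r by (simp add: order_trans[OF norm_ge_zero])
  have cauchy: "cmod ((deriv ^^ n) f a) \<le> fact n * B / r ^ n" for n
  proof (rule Cauchy_inequality)
    show "f holomorphic_on ball a r" using holf by (rule holomorphic_on_subset) auto
    show "continuous_on (cball a r) f" using holf by (rule holomorphic_on_imp_continuous_on)
  qed (use r Bf in auto)
  have "cmod (jordan_block_fun f k a $$ (i, l) * jordan_block_resolvent k a z $$ (l, j))
      = cmod ((deriv ^^ (l - i)) f a) / fact (l - i) * (1 / \<rho> ^ (j - l + 1))"
    using ilj unfolding jordan_block_fun_def jordan_block_resolvent_def \<rho>_def
    by (simp add: norm_mult norm_divide norm_power)
  also have "\<dots> \<le> (fact (l - i) * B / r ^ (l - i)) / fact (l - i) * (1 / \<rho> ^ (j - l + 1))"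
    using cauchy \<rho> by (intro mult_right_mono divide_right_mono) auto
  also have "\<dots> = B / r ^ (l - i) * (1 / \<rho> ^ (j - l + 1))" by simp
  also have "\<dots> \<le> B / (r ^ (k - 1) * \<rho>)"
    by (rule divide_power_mult_inverse_power_le) (use r \<rho> B ilj in auto)
  finally show ?thesis unfolding \<rho>_def .
qed

lemma Phi_block_entry_le:
  fixes f :: "complex \<Rightarrow> complex" and r B :: real
  assumes holf: "f holomorphic_on cball a r" and r: "0 < r" "r \<le> 1" "r \<le> cmod (z - a)"
    and Bf: "\<And>w. cmod (a - w) = r \<Longrightarrow> cmod (f w) \<le> B"
    and i: "i < k" and j: "j < k"
  shows "cmod (Phi_block f k a z $$ (i, j)) \<le> real (card (nonzero_derivs f a k)) * B / (r ^ (k - 1) * cmod (z - a))"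
proof -
  define c where "c = B / (r ^ (k - 1) * cmod (z - a))"
  define L where "L = {l. l < k \<and> i \<le> l \<and> (deriv ^^ (l - i)) f a \<noteq> 0}"
  have c: "0 \<le> c"
    using jordan_block_fun_resolvent_entry_product_le[OF holf r Bf order_refl order_refl j]
    unfolding c_def by (meson norm_ge_zero order_trans)
  have summand: "cmod (jordan_block_fun f k a $$ (i, l) * jordan_block_resolvent k a z $$ (l, j))
      \<le> (if l \<in> L then c else 0)" if l: "l < k" for l
  proof (cases "l \<in> L \<and> l \<le> j")
    case True
    then show ?thesis
      using jordan_block_fun_resolvent_entry_product_le[OF holf r Bf _ _ j] unfolding L_def c_def by simp
  next
    case False
    then have "jordan_block_fun f k a $$ (i, l) * jordan_block_resolvent k a z $$ (l, j) = 0"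
      using i j l unfolding L_def jordan_block_fun_def jordan_block_resolvent_def by auto
    then show ?thesis using c by auto
  qed
  have "L \<subseteq> {..<k}"
    unfolding L_def by auto
  have "card L \<le> card (nonzero_derivs f a k)"
  proof (rule card_inj_on_le)
    show "inj_on (\<lambda>l. l - i) L" unfolding L_def by (auto intro!: inj_onI)
    show "(\<lambda>l. l - i) ` L \<subseteq> nonzero_derivs f a k" unfolding L_def nonzero_derivs_def by auto
  qed (rule finite_nonzero_derivs)
  have "Phi_block f k a z $$ (i, j)
      = (\<Sum>l<k. jordan_block_fun f k a $$ (i, l) * jordan_block_resolvent k a z $$ (l, j))"
    using i j jordan_block_resolvent_carrier[of k a z]
    by (auto simp: Phi_block_def jordan_block_fun_def scalar_prod_def lessThan_atLeast0 intro!: sum.cong)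
  also have "cmod \<dots> \<le> (\<Sum>l<k. if l \<in> L then c else 0)"
    by (rule order_trans[OF norm_sum sum_mono]) (simp add: summand)
  also have "\<dots> = card L * c"
    using \<open>L \<subseteq> {..<k}\<close> by (simp add: sum.If_cases Int_absorb1)
  also have "\<dots> \<le> card (nonzero_derivs f a k) * c"
    using \<open>card L \<le> _\<close> c by (simp add: mult_right_mono)
  finally show ?thesis unfolding c_def by simp
qed

lemma Phi_block_sqnorm_le:
  fixes f :: "complex \<Rightarrow> complex" and r B :: real
  assumes holf: "f holomorphic_on cball a r" and r: "0 < r" "r \<le> 1" "r \<le> cmod (z - a)"
    and Bf: "\<And>w. cmod (a - w) = r \<Longrightarrow> cmod (f w) \<le> B"
    and u: "u \<in> carrier_vec k"
  defines "K \<equiv> real k * card (nonzero_derivs f a k) * B / (r ^ (k - 1) * cmod (z - a))"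
  shows "vec_sqnorm (Phi_block f k a z *\<^sub>v u) \<le> K\<^sup>2 * vec_sqnorm u"
    and "vec_sqnorm (transpose_mat (Phi_block f k a z) *\<^sub>v u) \<le> K\<^sup>2 * vec_sqnorm u"
proof -
  let ?E = "real (card (nonzero_derivs f a k)) * B / (r ^ (k - 1) * cmod (z - a))"
  have E: "cmod (Phi_block f k a z $$ (i, j)) \<le> ?E" if "i < k" "j < k" for i j
    using Phi_block_entry_le[OF holf r Bf that] .
  have "K = real k * ?E"
    unfolding K_def by simp
  then have K: "real k * real k * ?E\<^sup>2 = K\<^sup>2"
    by (simp add: power2_eq_square)
  show "vec_sqnorm (Phi_block f k a z *\<^sub>v u) \<le> K\<^sup>2 * vec_sqnorm u"
    using vec_sqnorm_mult_vec_le[OF Phi_block_carrier u E] unfolding K .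
  have T: "transpose_mat (Phi_block f k a z) \<in> carrier_mat k k"
    using Phi_block_carrier by simp
  have "cmod (transpose_mat (Phi_block f k a z) $$ (i, j)) \<le> ?E" if "i < k" "j < k" for i j
    using E[of j i] that Phi_block_carrier[of f k a z] by simp
  from vec_sqnorm_mult_vec_le[OF T u this]
  show "vec_sqnorm (transpose_mat (Phi_block f k a z) *\<^sub>v u) \<le> K\<^sup>2 * vec_sqnorm u"
    unfolding K .
qed

lemma Phi_block_eq_zero:
  assumes "zero_order_ge f a k"
  shows "Phi_block f k a z = 0\<^sub>m k k"
proof -
  have "jordan_block_fun f k a = 0\<^sub>m k k"
    using assms unfolding zero_order_ge_def jordan_block_fun_def by (intro eq_matI) auto
  then show ?thesis
    unfolding Phi_block_def by (simp add: left_mult_zero_mat[OF jordan_block_resolvent_carrier])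
qed

lemma h_term_leD:
  fixes f :: "complex \<Rightarrow> complex" and kf :: "nat \<Rightarrow> real"
  assumes contf: "continuous_on (cball a (1 - cmod a)) f"
    and nz: "\<not> zero_order_ge f a k" and a: "cmod a \<le> 1" and kf: "0 < kf k"
    and h: "h_term e kf f (a, k) \<le> ereal Hb"
  shows "cmod a < 1"
    and "w \<in> cball a (1 - cmod a) \<Longrightarrow>
      kf k * cmod (f w) \<le> Hb * (1 - cmod a) powr (real k - (if e then 1/2 else 0))"
proof -
  define r where "r = 1 - cmod a"
  define E where "E = (if e then 1/2 else (0::real))"
  define g where "g = (\<lambda>w. kf k * cmod (f w) / r powr (real k - E))"
  have h_eq: "h_term e kf f (a, k) = (if cmod a = 1 then \<infinity> else ereal (c_H e * Sup (g ` cball a r)))"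
    using nz unfolding h_term_def g_def r_def E_def by simp
  show a1: "cmod a < 1"
    using h a unfolding h_eq by (auto split: if_splits)
  then have r: "0 < r" unfolding r_def by simp
  have "continuous_on (cball a r) g"
    unfolding g_def r_def using contf a1 by (intro continuous_intros) auto
  then have bdd: "bdd_above (g ` cball a r)"
    by (intro bounded_imp_bdd_above compact_imp_bounded compact_continuous_image) simp_all
  have "0 \<le> g a" unfolding g_def using kf r by simp
  also have "g a \<le> Sup (g ` cball a r)"
    using bdd r by (intro cSup_upper) auto
  finally have "Sup (g ` cball a r) \<le> c_H e * Sup (g ` cball a r)"
    unfolding c_H_def by (simp add: mult_le_cancel_right1)
  also have "\<dots> \<le> Hb"
    using h a1 unfolding h_eq by simp
  finally have "g w \<le> Hb" if "w \<in> cball a r" for w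
    using cSup_upper[OF imageI[OF that] bdd] by linarith
  then show "w \<in> cball a (1 - cmod a) \<Longrightarrow> kf k * cmod (f w) \<le> Hb * (1 - cmod a) powr (real k - (if e then 1/2 else 0))"
    using r unfolding g_def r_def E_def by (simp add: divide_le_eq)
qed

lemma Phi_block_sqnorm_le_weighted:
  fixes f :: "complex \<Rightarrow> complex" and r M N E :: real
  assumes holf: "f holomorphic_on cball a r" and r: "0 < r" "r \<le> 1" "r \<le> cmod (z - a)"
    and k: "1 \<le> k" and count: "real (k * card (nonzero_derivs f a k)) \<le> N" and N: "0 < N"
    and fM: "\<And>w. cmod (a - w) = r \<Longrightarrow> N * cmod (f w) \<le> M * r powr (real k - E)" and M: "0 \<le> M"
    and u: "u \<in> carrier_vec k"
  defines "S \<equiv> (M * r powr (1 - E) / cmod (z - a))\<^sup>2"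
  shows "vec_sqnorm (Phi_block f k a z *\<^sub>v u) \<le> S * vec_sqnorm u"
    and "vec_sqnorm (transpose_mat (Phi_block f k a z) *\<^sub>v u) \<le> S * vec_sqnorm u"
proof -
  define B where "B = M * r powr (real k - E) / N"
  define K where "K = real k * card (nonzero_derivs f a k) * B / (r ^ (k - 1) * cmod (z - a))"
  have Bf: "cmod (f w) \<le> B" if "cmod (a - w) = r" for w
    using fM[OF that] N unfolding B_def by (simp add: le_divide_eq mult.commute)
  have B: "0 \<le> B" unfolding B_def using M N by simp
  have "real k - E = (1 - E) + real (k - 1)"
    using k by (simp add: of_nat_diff)
  then have "r powr (real k - E) = r powr (1 - E) * r ^ (k - 1)"
    using r by (simp only: powr_add powr_realpow)
  then have N_eq: "N * B / (r ^ (k - 1) * cmod (z - a)) = M * r powr (1 - E) / cmod (z - a)"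
    using N r unfolding B_def by simp
  have "real k * card (nonzero_derivs f a k) * B \<le> N * B"
    using count B by (intro mult_right_mono) simp_all
  then have "K \<le> M * r powr (1 - E) / cmod (z - a)"
    unfolding K_def N_eq[symmetric] using r by (intro divide_right_mono) simp_all
  moreover have "0 \<le> K" unfolding K_def using B r by simp
  ultimately have "K\<^sup>2 * vec_sqnorm u \<le> S * vec_sqnorm u"
    unfolding S_def by (intro mult_right_mono power_mono vec_sqnorm_nonneg)
  then show "vec_sqnorm (Phi_block f k a z *\<^sub>v u) \<le> S * vec_sqnorm u"
    and "vec_sqnorm (transpose_mat (Phi_block f k a z) *\<^sub>v u) \<le> S * vec_sqnorm u"
    using Phi_block_sqnorm_le[OF holf r Bf u, folded K_def] by simp_all
qed

lemma Phi_block_sqnorm_le_h_term: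
  fixes f :: "complex \<Rightarrow> complex" and kf :: "nat \<Rightarrow> real"
  assumes entire: "f holomorphic_on UNIV" and a: "cmod a \<le> 1"
    and count: "real (k * card (nonzero_derivs f a k)) \<le> kf k"
    and h: "h_term e kf f (a, k) \<le> ereal Hb" and Hb: "0 \<le> Hb"
    and z: "cmod z = 1" "z \<noteq> a" and u: "u \<in> carrier_vec k"
  defines "G \<equiv> if cmod a < 1 then (Hb * (1 - cmod a) powr (if e then 1/2 else 1) / cmod (z - a))\<^sup>2 else 0"
  shows "vec_sqnorm (Phi_block f k a z *\<^sub>v u) \<le> G * vec_sqnorm u
    \<and> vec_sqnorm (transpose_mat (Phi_block f k a z) *\<^sub>v u) \<le> G * vec_sqnorm u"
proof (cases "zero_order_ge f a k")
  case True
  \<comment> \<open>the block vanishes, which also covers eigenvalues on the unit circle\<close>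
  have "0 \<le> G * vec_sqnorm u"
    unfolding G_def by (simp add: vec_sqnorm_nonneg)
  then show ?thesis
    using u by (simp add: Phi_block_eq_zero[OF True] vec_sqnorm_zero_mat_mult_vec)
next
  case False
  define r where "r = 1 - cmod a"
  define E where "E = (if e then 1/2 else (0::real))"
  have "nonzero_derivs f a k \<noteq> {}"
    using False zero_order_ge_iff_nonzero_derivs_empty by blast
  then have "1 \<le> card (nonzero_derivs f a k)" and k: "1 \<le> k"
    using finite_nonzero_derivs unfolding nonzero_derivs_def by (auto simp: Suc_le_eq card_gt_0_iff)
  then have "1 \<le> k * card (nonzero_derivs f a k)"
    by (metis mult_le_mono nat_mult_1)
  then have kf: "0 < kf k"
    using count by linarith
  have contf: "continuous_on (cball a r) f"
    using entire holomorphic_on_imp_continuous_on continuous_on_subset by blast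
  have a1: "cmod a < 1"
    using h_term_leD(1)[OF contf[unfolded r_def] False a kf h] .
  have r: "0 < r" "r \<le> 1" "r \<le> cmod (z - a)"
    unfolding r_def using a1 z norm_triangle_ineq2[of z a] by auto
  have "kf k * cmod (f w) \<le> Hb * r powr (real k - E)" if "cmod (a - w) = r" for w
    using h_term_leD(2)[OF contf[unfolded r_def] False a kf h] that
    unfolding r_def E_def by (simp add: dist_norm)
  moreover have "G = (Hb * r powr (1 - E) / cmod (z - a))\<^sup>2"
    unfolding G_def r_def E_def using a1 by simp
  moreover have "f holomorphic_on cball a r"
    using entire by (rule holomorphic_on_subset) simp
  ultimately show ?thesis
    using Phi_block_sqnorm_le_weighted[OF _ r k count kf _ Hb u] by simp
qed

lemma op_norm_le:
  assumes A: "A \<in> carrier_mat m n" and C: "0 \<le> C"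
    and gain: "\<And>v. v \<in> carrier_vec n \<Longrightarrow> vec_sqnorm (A *\<^sub>v v) \<le> C\<^sup>2 * vec_sqnorm v"
  shows "op_norm A \<le> C"
  unfolding op_norm_def
proof (rule cSup_least)
  fix y assume "y \<in> insert 0 {vec_norm2 (A *\<^sub>v v) |v. v \<in> carrier_vec (dim_col A) \<and> vec_norm2 v = 1}"
  then consider "y = 0" | v where "y = vec_norm2 (A *\<^sub>v v)" "v \<in> carrier_vec n" "vec_sqnorm v = 1"
    using A by (auto simp: vec_norm2_eq_sqrt_sqnorm)
  then show "y \<le> C"
  proof cases
    case 2
    then have "vec_sqnorm (A *\<^sub>v v) \<le> C\<^sup>2"
      using gain[of v] by simp
    from real_sqrt_le_mono[OF this] show ?thesis
      using 2(1) C by (simp add: vec_norm2_eq_sqrt_sqnorm)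
  qed (use C in simp)
qed simp

section \<open>The Poisson integral\<close>

lemma inverse_sqnorm_diff_on_circle:
  fixes u a :: complex
  assumes u: "cmod u = 1" and a: "cmod a < 1"
  shows "u / ((1 - cnj a * u) * (u - a)) = of_real (1 / (cmod (u - a))\<^sup>2)"
proof -
  have "u * cnj u = 1" using complex_norm_square[of u] u by simp
  then have factor: "1 - cnj a * u = u * cnj (u - a)" by (simp add: algebra_simps)
  have "u \<noteq> 0" using u by auto
  then have "u / ((u * cnj (u - a)) * (u - a)) = 1 / (cnj (u - a) * (u - a))"
    by (simp add: mult.assoc)
  also have "\<dots> = 1 / of_real ((cmod (u - a))\<^sup>2)"
    unfolding complex_norm_square by (simp only: mult.commute)
  also have "\<dots> = of_real (1 / (cmod (u - a))\<^sup>2)"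
    by simp
  finally show ?thesis unfolding factor .
qed

lemma Poisson_integral_unit_interval:
  fixes a :: complex
  assumes a: "cmod a < 1"
  shows "((\<lambda>x. 1 / (cmod (cis (2 * pi * x) - a))\<^sup>2) has_integral 1 / (1 - (cmod a)\<^sup>2)) {0..1}"
proof -
  define h where "h = (\<lambda>u. 1 / (1 - cnj a * u))"
  define \<psi> where "\<psi> = (\<lambda>x::real. 1 / (cmod (cis (2 * pi * x) - a))\<^sup>2)"
  have "1 - cnj a * u \<noteq> 0" if "u \<in> cball 0 1" for u
  proof -
    have "cmod (cnj a * u) \<le> cmod a"
      using that mult_left_le[of "cmod u" "cmod a"] by (simp add: norm_mult)
    then show ?thesis using a by auto
  qed
  then have "h holomorphic_on cball 0 1"
    unfolding h_def by (intro holomorphic_intros) auto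
  then have "((\<lambda>u. h u / (u - a)) has_contour_integral (2 * of_real pi * \<i> * h a)) (circlepath 0 1)"
    by (rule Cauchy_integral_circlepath_simple) (use a in simp)
  then have I1: "((\<lambda>x. h (circlepath 0 1 x) / (circlepath 0 1 x - a) * vector_derivative (circlepath 0 1) (at x))
      has_integral (2 * of_real pi * \<i> * h a)) {0..1}"
    by (simp add: has_contour_integral)
  have "h (circlepath 0 1 x) / (circlepath 0 1 x - a) * vector_derivative (circlepath 0 1) (at x)
      = (2 * of_real pi * \<i>) * of_real (\<psi> x)" for x
  proof -
    define u where "u = cis (2 * pi * x)"
    have cu: "circlepath 0 1 x = u"
      unfolding circlepath u_def by (simp add: cis_conv_exp mult_ac)
    have du: "vector_derivative (circlepath 0 1) (at x) = 2 * pi * \<i> * u"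
      unfolding vector_derivative_circlepath u_def by (simp add: cis_conv_exp mult_ac)
    have "h u / (u - a) * (2 * pi * \<i> * u) = (2 * of_real pi * \<i>) * (u / ((1 - cnj a * u) * (u - a)))"
      unfolding h_def by (simp add: field_simps)
    also have "\<dots> = (2 * of_real pi * \<i>) * of_real (\<psi> x)"
      unfolding \<psi>_def u_def[symmetric] by (subst inverse_sqnorm_diff_on_circle) (use a u_def in auto)
    finally show ?thesis unfolding cu du .
  qed
  with I1 have "((\<lambda>x. (2 * of_real pi * \<i>) * of_real (\<psi> x)) has_integral (2 * of_real pi * \<i> * h a)) {0..1}"
    by simp
  from has_integral_mult_right[OF this, of "1 / (2 * of_real pi * \<i>)"]
  have "((\<lambda>x. of_real (\<psi> x) :: complex) has_integral h a) {0..1}"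
    by (simp add: field_simps)
  from has_integral_linear[OF this bounded_linear_Re]
  have "(\<psi> has_integral Re (h a)) {0..1}"
    by (simp add: o_def)
  moreover have "h a = of_real (1 / (1 - (cmod a)\<^sup>2))"
    unfolding h_def using complex_norm_square[of a] by (simp add: mult.commute)
  ultimately show ?thesis
    unfolding \<psi>_def by (simp only: Re_complex_of_real)
qed

lemma Poisson_integral:
  fixes a :: complex
  assumes a: "cmod a < 1"
  shows "((\<lambda>t. 1 / (cmod (cis t - a))\<^sup>2) has_integral 2 * pi / (1 - (cmod a)\<^sup>2)) {0..2*pi}"
proof -
  have "(\<lambda>x. x / (2 * pi)) ` {0..2 * pi} = {0..1}"
  proof (intro equalityI subsetI)
    fix y :: real assume "y \<in> {0..1}"
    then show "y \<in> (\<lambda>x. x / (2 * pi)) ` {0..2 * pi}"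
      by (intro image_eqI[of _ _ "2 * pi * y"]) auto
  qed auto
  with Poisson_integral_unit_interval[OF a]
  have "((\<lambda>x. 1 / (cmod (cis (2 * pi * x) - a))\<^sup>2) has_integral 1 / (1 - (cmod a)\<^sup>2))
      ((\<lambda>x. x / (2 * pi)) ` {0..2 * pi})"
    by simp
  then have "((\<lambda>t. 1 / (cmod (cis t - a))\<^sup>2) has_integral (\<bar>2 * pi\<bar> *\<^sub>R (1 / (1 - (cmod a)\<^sup>2)))) {0..2 * pi}"
    by (subst has_integral_stretch_real_iff[symmetric, where m = "2 * pi"]) auto
  then show ?thesis by simp
qed

definition Poisson_weight :: "real \<Rightarrow> complex \<Rightarrow> real \<Rightarrow> real" where
  "Poisson_weight c a t = (if cmod a < 1 then c * (1 - cmod a) * (1 / (cmod (cis t - a))\<^sup>2) else 0)"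

lemma Poisson_weight_nonneg: "0 \<le> c \<Longrightarrow> 0 \<le> Poisson_weight c a t"
  unfolding Poisson_weight_def by simp

lemma Poisson_weight_has_integral:
  "(Poisson_weight c a has_integral (if cmod a < 1 then c * (1 - cmod a) * (2 * pi / (1 - (cmod a)\<^sup>2)) else 0))
    {0..2*pi}"
proof (cases "cmod a < 1")
  case True
  show ?thesis
    unfolding Poisson_weight_def if_P[OF True]
    by (rule has_integral_mult_right[OF Poisson_integral[OF True]])
qed (simp add: Poisson_weight_def[abs_def])

lemma Poisson_weight_integral_le:
  assumes c: "0 \<le> c"
  shows "integral {0..2*pi} (Poisson_weight c a) \<le> 2 * pi * c"
proof (cases "cmod a < 1")
  case True
  have "integral {0..2*pi} (Poisson_weight c a) = 2 * pi * c * ((1 - cmod a) / (1 - (cmod a)\<^sup>2))"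
    using integral_unique[OF Poisson_weight_has_integral[of c a]] True by (simp add: mult_ac)
  also have "\<dots> \<le> 2 * pi * c * 1"
    using True c by (intro mult_left_mono)
      (simp_all add: divide_le_eq power2_eq_square algebra_simps mult_left_le_one_le)
  finally show ?thesis by simp
qed (use c integral_unique[OF Poisson_weight_has_integral[of c a]] in simp)

lemma esqrt_mean_nn_integral_le:
  fixes F :: "real \<Rightarrow> ennreal" and g :: "real \<Rightarrow> real"
  assumes le: "\<And>t. F t \<le> ennreal (g t)" and g: "\<And>t. 0 \<le> g t"
    and int: "(g has_integral I) {0..2*pi}" and I: "I \<le> 2 * pi * C\<^sup>2" and C: "0 \<le> C"
  shows "esqrt (ennreal (1 / (2 * pi)) * (\<integral>\<^sup>+ t. F t \<partial>lebesgue_on {0..2*pi})) \<le> ereal C"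
proof -
  have "(\<integral>\<^sup>+ t. F t \<partial>lebesgue_on {0..2*pi}) \<le> (\<integral>\<^sup>+ t. ennreal (g t) \<partial>lebesgue_on {0..2*pi})"
    by (rule nn_integral_mono) (rule le)
  also have "\<dots> = (\<integral>\<^sup>+ t. ennreal (g t) * indicator {0..2*pi} t \<partial>lebesgue)"
    by (rule nn_integral_restrict_space) auto
  also have "\<dots> = (\<integral>\<^sup>+ t. ennreal (g t) * indicator {0..2*pi} t \<partial>lborel)"
    by (rule nn_integral_completion)
  also have "\<dots> = ennreal I"
    by (rule nn_integral_has_integral_lebesgue'[OF g int])
  also have "\<dots> \<le> ennreal (2 * pi * C\<^sup>2)"
    using I by (rule ennreal_leI)
  finally have "ennreal (1 / (2 * pi)) * (\<integral>\<^sup>+ t. F t \<partial>lebesgue_on {0..2*pi})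
      \<le> ennreal (1 / (2 * pi)) * ennreal (2 * pi * C\<^sup>2)"
    by (rule mult_left_mono) simp
  also have "\<dots> = ennreal (C\<^sup>2)"
    by (simp add: ennreal_mult[symmetric])
  finally have Y: "ennreal (1 / (2 * pi)) * (\<integral>\<^sup>+ t. F t \<partial>lebesgue_on {0..2*pi}) \<le> ennreal (C\<^sup>2)" .
  then have "enn2real (ennreal (1 / (2 * pi)) * (\<integral>\<^sup>+ t. F t \<partial>lebesgue_on {0..2*pi})) \<le> C\<^sup>2"
    by (intro enn2real_leI) simp
  with Y show ?thesis
    unfolding esqrt_def using C real_sqrt_le_mono by (fastforce simp: top_unique)
qed

section \<open>The two norms\<close>

lemma Phi_sqnorm_le_on_circle:
  fixes f :: "complex \<Rightarrow> complex" and kf :: "nat \<Rightarrow> real"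
  assumes entire: "f holomorphic_on UNIV"
    and disk: "\<And>k a. (k, a) \<in> set n_as \<Longrightarrow> cmod a \<le> 1"
    and count: "\<And>k a. (k, a) \<in> set n_as \<Longrightarrow> real (k * card (nonzero_derivs f a k)) \<le> kf k"
    and h: "\<And>k a. (k, a) \<in> set n_as \<Longrightarrow> h_term False kf f (a, k) \<le> ereal Hb"
    and Hb: "0 \<le> Hb" and z: "cmod z = 1" "z \<notin> eigs n_as"
    and v: "v \<in> carrier_vec (dim_sum fst n_as)"
  shows "vec_sqnorm (Phi f n_as z *\<^sub>v v) \<le> Hb\<^sup>2 * vec_sqnorm v"
proof -
  have block: "vec_sqnorm (Phi_block f k a z *\<^sub>v u) \<le> Hb\<^sup>2 * vec_sqnorm u"
    if x: "(k, a) \<in> set n_as" and u: "u \<in> carrier_vec k" for k a u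
  proof -
    have za: "z \<noteq> a" using z x unfolding eigs_def by force
    have "1 - cmod a \<le> cmod (z - a)"
      using z norm_triangle_ineq2[of z a] by simp
    then have G: "(if cmod a < 1 then (Hb * (1 - cmod a) powr (if False then 1/2 else 1) / cmod (z - a))\<^sup>2
        else 0) \<le> Hb\<^sup>2"
      using za Hb disk[OF x]
      by (simp add: divide_le_eq power_divide power_mult_distrib mult_left_mono power_mono)
    have "vec_sqnorm (Phi_block f k a z *\<^sub>v u)
        \<le> (if cmod a < 1 then (Hb * (1 - cmod a) powr (if False then 1/2 else 1) / cmod (z - a))\<^sup>2
            else 0) * vec_sqnorm u"
      using Phi_block_sqnorm_le_h_term[OF entire disk[OF x] count[OF x] h[OF x] Hb z(1) za u] by blast
    also have "\<dots> \<le> Hb\<^sup>2 * vec_sqnorm u"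
      using G vec_sqnorm_nonneg by (rule mult_right_mono)
    finally show ?thesis .
  qed
  have "vec_sqnorm (Phi f n_as z *\<^sub>v v) \<le> block_weighted_sqnorm fst (\<lambda>_. Hb\<^sup>2) n_as v"
    unfolding Phi_eq_diag_block_mat[OF z(2)]
    by (rule diag_block_mat_mult_vec_sqnorm_le[OF Phi_block_carrier _ v]) (auto intro: block)
  also have "\<dots> \<le> Hb\<^sup>2 * vec_sqnorm v"
    by (rule block_weighted_sqnorm_le[OF _ v]) simp
  finally show ?thesis .
qed

lemma Hinf_norm_le:
  fixes f :: "complex \<Rightarrow> complex" and kf :: "nat \<Rightarrow> real"
  assumes entire: "f holomorphic_on UNIV"
    and disk: "\<And>k a. (k, a) \<in> set n_as \<Longrightarrow> cmod a \<le> 1"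
    and count: "\<And>k a. (k, a) \<in> set n_as \<Longrightarrow> real (k * card (nonzero_derivs f a k)) \<le> kf k"
    and h: "\<And>k a. (k, a) \<in> set n_as \<Longrightarrow> h_term False kf f (a, k) \<le> ereal Hb"
    and Hb: "0 \<le> Hb"
  shows "Hinf_norm f n_as \<le> ereal Hb"
  unfolding Hinf_norm_def
proof (rule SUP_least)
  fix z assume "z \<in> sphere 0 1 - eigs n_as"
  then have z: "cmod z = 1" "z \<notin> eigs n_as" by auto
  have "op_norm (Phi f n_as z) \<le> Hb"
    unfolding Phi_eq_diag_block_mat[OF z(2)]
    by (intro op_norm_le[OF diag_block_mat_carrier[OF Phi_block_carrier] Hb])
      (use Phi_sqnorm_le_on_circle[OF entire disk count h Hb z] in \<open>simp add: Phi_eq_diag_block_mat[OF z(2)]\<close>)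
  then show "ereal (op_norm (Phi f n_as z)) \<le> ereal Hb" by simp
qed

lemma transpose_Phi_sqnorm_le_Poisson_weight:
  fixes f :: "complex \<Rightarrow> complex" and kf :: "nat \<Rightarrow> real"
  assumes entire: "f holomorphic_on UNIV"
    and disk: "\<And>k a. (k, a) \<in> set n_as \<Longrightarrow> cmod a \<le> 1"
    and count: "\<And>k a. (k, a) \<in> set n_as \<Longrightarrow> real (k * card (nonzero_derivs f a k)) \<le> kf k"
    and h: "\<And>k a. (k, a) \<in> set n_as \<Longrightarrow> h_term True kf f (a, k) \<le> ereal Hb"
    and Hb: "0 \<le> Hb" and t: "cis t \<notin> eigs n_as"
    and v: "v \<in> carrier_vec (dim_sum fst n_as)"
  shows "vec_sqnorm (transpose_mat (Phi f n_as (cis t)) *\<^sub>v v)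
    \<le> block_weighted_sqnorm fst (\<lambda>x. Poisson_weight (Hb\<^sup>2) (snd x) t) n_as v"
proof -
  have block: "vec_sqnorm (transpose_mat (Phi_block f k a (cis t)) *\<^sub>v u)
      \<le> Poisson_weight (Hb\<^sup>2) a t * vec_sqnorm u"
    if x: "(k, a) \<in> set n_as" and u: "u \<in> carrier_vec k" for k a u
  proof -
    have za: "cis t \<noteq> a" using t x unfolding eigs_def by force
    have "(if cmod a < 1 then (Hb * (1 - cmod a) powr (if True then 1/2 else 1) / cmod (cis t - a))\<^sup>2 else 0)
        = Poisson_weight (Hb\<^sup>2) a t"
      unfolding Poisson_weight_def by (simp add: power_divide power_mult_distrib powr_half_sqrt)
    with Phi_block_sqnorm_le_h_term[OF entire disk[OF x] count[OF x] h[OF x] Hb _ za u]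
    show ?thesis by simp
  qed
  have "transpose_mat (Phi f n_as (cis t))
      = diag_block_mat (map (\<lambda>x. transpose_mat (Phi_block f (fst x) (snd x) (cis t))) n_as)"
    unfolding Phi_eq_diag_block_mat[OF t] by (rule transpose_diag_block_mat) (rule Phi_block_carrier)
  then show ?thesis
    by (simp only:)
      (rule diag_block_mat_mult_vec_sqnorm_le[OF _ _ v], auto intro: block simp: Phi_block_carrier)
qed

lemma H2op_norm_le:
  fixes f :: "complex \<Rightarrow> complex" and kf :: "nat \<Rightarrow> real"
  assumes entire: "f holomorphic_on UNIV"
    and disk: "\<And>k a. (k, a) \<in> set n_as \<Longrightarrow> cmod a \<le> 1"
    and count: "\<And>k a. (k, a) \<in> set n_as \<Longrightarrow> real (k * card (nonzero_derivs f a k)) \<le> kf k"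
    and h: "\<And>k a. (k, a) \<in> set n_as \<Longrightarrow> h_term True kf f (a, k) \<le> ereal Hb"
    and Hb: "0 \<le> Hb"
  shows "H2op_norm f n_as \<le> ereal Hb"
  unfolding H2op_norm_def Let_def
proof (rule SUP_least)
  fix v assume "v \<in> {v \<in> carrier_vec (dim_sum fst n_as). vec_norm2 v = 1}"
  then have v: "v \<in> carrier_vec (dim_sum fst n_as)" and v1: "vec_sqnorm v = 1"
    by (auto simp: vec_norm2_eq_sqrt_sqnorm)
  define g where "g t = block_weighted_sqnorm fst (\<lambda>x. Poisson_weight (Hb\<^sup>2) (snd x) t) n_as v" for t
  define I where "I x = integral {0..2*pi} (Poisson_weight (Hb\<^sup>2) (snd x))" for x :: "nat \<times> complex"
  have int: "(g has_integral block_weighted_sqnorm fst I n_as v) {0..2*pi}"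
    unfolding g_def I_def
    by (intro has_integral_block_weighted_sqnorm integrable_integral has_integral_integrable)
      (rule Poisson_weight_has_integral)
  have "block_weighted_sqnorm fst I n_as v \<le> 2 * pi * Hb\<^sup>2 * vec_sqnorm v"
    unfolding I_def by (intro block_weighted_sqnorm_le[OF _ v] Poisson_weight_integral_le) simp
  then have I: "block_weighted_sqnorm fst I n_as v \<le> 2 * pi * Hb\<^sup>2"
    using v1 by simp
  have g_nonneg: "0 \<le> g t" for t
    unfolding g_def by (intro block_weighted_sqnorm_nonneg Poisson_weight_nonneg) simp
  have "(if cis t \<in> eigs n_as then 0 else (vec_norm2 (transpose_mat (Phi f n_as (cis t)) *\<^sub>v v))\<^sup>2) \<le> g t" for t
  proof (cases "cis t \<in> eigs n_as")
    case False
    then show ?thesis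
      using transpose_Phi_sqnorm_le_Poisson_weight[OF entire disk count h Hb False v]
      unfolding g_def by (simp add: vec_norm2_eq_sqrt_sqnorm vec_sqnorm_nonneg)
  qed (simp add: g_nonneg)
  then show "esqrt (ennreal (1 / (2 * pi)) * (\<integral>\<^sup>+ t. ennreal (if cis t \<in> eigs n_as then 0
        else (vec_norm2 (transpose_mat (Phi f n_as (cis t)) *\<^sub>v v))\<^sup>2) \<partial>lebesgue_on {0..2*pi})) \<le> ereal Hb"
    by (intro esqrt_mean_nn_integral_le[OF _ g_nonneg int I Hb] ennreal_leI)
qed

lemma le_H_boundI:
  assumes "\<And>Hb. 0 \<le> Hb \<Longrightarrow> (\<And>k a. (k, a) \<in> set n_as \<Longrightarrow> h_term e kf f (a, k) \<le> ereal Hb) \<Longrightarrow> N \<le> ereal Hb"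
  shows "N \<le> H_bound e kf f (blkspec n_as)"
proof -
  have H0: "0 \<le> H_bound e kf f (blkspec n_as)"
    unfolding H_bound_def by (rule Sup_upper) simp
  have h: "h_term e kf f (a, k) \<le> H_bound e kf f (blkspec n_as)" if "(k, a) \<in> set n_as" for k a
    using that unfolding H_bound_def blkspec_def by (intro Sup_upper) auto
  show ?thesis
  proof (cases "H_bound e kf f (blkspec n_as)")
    case (real Hb)
    then show ?thesis using assms H0 h by auto
  qed (use H0 in auto)
qed

lemma Phi_norms_le_H_bound:
  fixes f :: "complex \<Rightarrow> complex" and kf :: "nat \<Rightarrow> real"
  assumes entire: "f holomorphic_on UNIV"
    and disk: "\<forall>(k, a) \<in> set n_as. cmod a \<le> 1"
    and count: "\<And>k a. (k, a) \<in> set n_as \<Longrightarrow> real (k * card (nonzero_derivs f a k)) \<le> kf k"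
  shows "Hinf_norm f n_as \<le> H_bound False kf f (blkspec n_as)
    \<and> H2op_norm f n_as \<le> H_bound True kf f (blkspec n_as)"
  using disk count
  by (auto intro!: le_H_boundI Hinf_norm_le[OF entire] H2op_norm_le[OF entire])

lemma higher_deriv_poly: "(deriv ^^ m) (poly p) = poly ((pderiv ^^ m) p)"
  by (induct m) (auto intro!: DERIV_imp_deriv ext)

lemma card_nonzero_derivs_le: "card (nonzero_derivs f a k) \<le> k"
  using card_mono[of "{..<k}" "nonzero_derivs f a k"] unfolding nonzero_derivs_def by auto

lemma card_nonzero_derivs_poly_le: "card (nonzero_derivs (poly p) a k) \<le> degree p + 1"
proof -
  have "(pderiv ^^ m) p = 0" if "degree p < m" for m
    using that by (intro poly_eqI) (simp add: coeff_higher_pderiv coeff_eq_0)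
  then have "nonzero_derivs (poly p) a k \<subseteq> {..degree p}"
    unfolding nonzero_derivs_def higher_deriv_poly by (auto simp: not_less[symmetric])
  then show ?thesis
    using card_mono[of "{..degree p}"] by fastforce
qed

theorem proposition18:
  fixes f :: "complex \<Rightarrow> complex" and n_as :: "(nat \<times> complex) list"
  assumes entire: "f holomorphic_on UNIV"
    and jnf: "0 \<notin> fst ` set n_as"
    and disk: "\<forall>(k, a) \<in> set n_as. cmod a \<le> 1"
  shows "Hinf_norm f n_as \<le> H_bound False (\<lambda>k. real k ^ 2) f (blkspec n_as)
       \<and> H2op_norm f n_as \<le> H_bound True (\<lambda>k. real k ^ 2) f (blkspec n_as)
       \<and> (\<forall>(p :: complex poly) (d :: nat). f = poly p \<and> degree p \<le> d \<longrightarrow>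
            (let kf = (\<lambda>k. if d < k then real k * real (d + 1) else real k ^ 2) in
              Hinf_norm f n_as \<le> H_bound False kf f (blkspec n_as)
            \<and> H2op_norm f n_as \<le> H_bound True kf f (blkspec n_as)))"
proof -
  have "Hinf_norm f n_as \<le> H_bound False (\<lambda>k. real k ^ 2) f (blkspec n_as)
      \<and> H2op_norm f n_as \<le> H_bound True (\<lambda>k. real k ^ 2) f (blkspec n_as)"
    using card_nonzero_derivs_le
    by (intro Phi_norms_le_H_bound[OF entire disk]) (simp add: power2_eq_square mult_left_mono)
  moreover have "Hinf_norm f n_as \<le> H_bound False kf f (blkspec n_as)
      \<and> H2op_norm f n_as \<le> H_bound True kf f (blkspec n_as)"
    if "f = poly p" "degree p \<le> d" and kf: "kf = (\<lambda>k. if d < k then real k * real (d + 1) else real k ^ 2)"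
    for p d kf
  proof (rule Phi_norms_le_H_bound[OF entire disk])
    fix k a
    have "card (nonzero_derivs f a k) \<le> k" "card (nonzero_derivs f a k) \<le> d + 1"
      using card_nonzero_derivs_le[of f a k] card_nonzero_derivs_poly_le[of p a k] that by auto
    then show "real (k * card (nonzero_derivs f a k)) \<le> kf k"
      unfolding kf by (simp add: power2_eq_square mult_left_mono)
  qed
  ultimately show ?thesis
    by (auto simp: Let_def)
qed

end
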